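(* Let $L\ge 2$ and let $N_1,\dots,N_L$ be positive integers. With the notation and setting described in the context, the root mean square error of the projected multilevel Monte Carlo estimator satisfies $$\Big(\mathbb{E}\big[\|E^{\mathrm{PML}}_L(u)-\mathbb{E}[u]\|_V^2\big]\Big)^{1/2}\;\le\; c_0\,\|u\| + \sum_{l=1}^{L} c_l\,\|u-u_l\|,$$ where $$c_0=N_1^{-1/2}+2\sum_{l=2}^L N_l^{-1/2},\qquad c_1=1+N_1^{-1/2}+2N_2^{-1/2},$$ $$c_l=2+2N_l^{-1/2}+2N_{l+1}^{-1/2}\ \ (l=2,\dots,L-1),\qquad c_L=2+2N_L^{-1/2}.$$
   Context: Let $(\Omega,\mathcal H,\mathbb P)$ be a probability space and $D\subset\mathbb R^d$ a bounded domain. Let $V=H^1_0(D)$ with inner product $(u,v)=\int_D(\nabla u\cdot\nabla v+uv)\,dx$ and norm $\|\cdot\|_V$. For a $V$-valued random variable $X\in L^2(\Omega;V)$, $\mathbb E[X]$ denotes its Bochner expectation (an element of $V$), $\|X\|:=(\mathbb E[\|X\|_V^2])^{1/2}$ is the $L^2(\Omega;V)$ norm, and $\mathrm{Var}[X]:=\mathbb E[\|X-\mathbb E[X]\|_V^2]$. Let $u\in L^2(\Omega;V)$ (the solution of the PDE with random input), let $V_1\subset V_2\subset\cdots\subset V_L\subset V$ be nested closed subspaces (e.g. nested piecewise linear finite element spaces on hierarchically refined triangulations), and let $u_l\in L^2(\Omega;V_l)$, $l=1,\dots,L$, be approximations of $u$ (e.g. Galerkin finite element approximations for the same realization of the random input);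 set $u_0:=0$. Let $P_1:=0$ and, for $l\ge 2$, let $P_l:V_l\to V_{l-1}$ be the orthogonal projection with respect to $(\cdot,\cdot)$, i.e. $(P_lw,v)=(w,v)$ for all $v\in V_{l-1}$. For each level $l$, let $u_l^{(l,1)},\dots,u_l^{(l,N_l)}$ be independent, identically distributed copies of $u_l$, with the sample collections for different levels mutually independent. The projected multilevel Monte Carlo (PMLMC) estimator is $$E^{\mathrm{PML}}_L(u)=\sum_{l=1}^L\frac1{N_l}\sum_{k=1}^{N_l}(I-P_l)\,u_l^{(l,k)}.$$ *)

theory Defs
  imports "HOL-Probability.Probability"
begin

definition orth_proj :: "'v::real_inner set \<Rightarrow> 'v \<Rightarrow> 'v" where
  "orth_proj S w = (THE p. p \<in> S \<and> (\<forall>v\<in>S. inner p v = inner w v))"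

definition Pproj :: "(nat \<Rightarrow> 'v::real_inner set) \<Rightarrow> nat \<Rightarrow> 'v \<Rightarrow> 'v" where
  "Pproj V l w = (if l \<le> 1 then 0 else orth_proj (V (l - 1)) w)"

definition L2rv :: "'w measure \<Rightarrow> ('w \<Rightarrow> 'v::real_normed_vector) \<Rightarrow> bool" where
  "L2rv M X \<longleftrightarrow> X \<in> borel_measurable M \<and> integrable M (\<lambda>\<omega>. (norm (X \<omega>))\<^sup>2)"

definition L2norm :: "'w measure \<Rightarrow> ('w \<Rightarrow> 'v::real_normed_vector) \<Rightarrow> real" where
  "L2norm M X = sqrt (integral\<^sup>L M (\<lambda>\<omega>. (norm (X \<omega>))\<^sup>2))"

text \<open>The PMLMC estimator, evaluated at omega; Xs l k = k-th sample on level l.\<close>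
definition E_PML :: "(nat \<Rightarrow> 'v::real_inner set) \<Rightarrow> nat \<Rightarrow> (nat \<Rightarrow> nat)
    \<Rightarrow> (nat \<Rightarrow> nat \<Rightarrow> 'w \<Rightarrow> 'v) \<Rightarrow> 'w \<Rightarrow> 'v" where
  "E_PML V L N Xs \<omega> =
     (\<Sum>l = 1..L. (1 / real (N l)) *\<^sub>R (\<Sum>k = 1..N l. Xs l k \<omega> - Pproj V l (Xs l k \<omega>)))"

definition c0 :: "nat \<Rightarrow> (nat \<Rightarrow> nat) \<Rightarrow> real" where
  "c0 L N = 1 / sqrt (real (N 1)) + 2 * (\<Sum>l = 2..L. 1 / sqrt (real (N l)))"

definition cl :: "nat \<Rightarrow> (nat \<Rightarrow> nat) \<Rightarrow> nat \<Rightarrow> real" where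
  "cl L N l =
     (if l = 1 then 1 + 1 / sqrt (real (N 1)) + 2 / sqrt (real (N 2))
      else if l = L then 2 + 2 / sqrt (real (N L))
      else 2 + 2 / sqrt (real (N l)) + 2 / sqrt (real (N (l + 1))))"

end

theory Submission
  imports Defs
begin

(* Split the mean square error into the variance of the estimator and its squared bias.
   The estimator is a sum of independent terms, so its variance is
   Sum_l N_l^-1 Var[(I - P_l) u_l] <= Sum_l N_l^-1 E ||u_l - u_(l-1)||^2: the variance is at most
   the second moment, and P_l u_l is the best approximation of u_l in V_(l-1), which contains
   u_(l-1). Since P_1 = 0, the bias E[Sum_l (I - P_l) u_l - u] telescopes to
   E[u_L - u + Sum_(l>=2) P_l (u_(l-1) - u_l)], whose norm is at most
   ||u - u_L|| + Sum_(l>=2) ||u_l - u_(l-1)||. Finally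
   ||u_l - u_(l-1)|| <= ||u - u_l|| + ||u - u_(l-1)|| with u_0 = 0, and collecting the
   coefficients of each ||u - u_l|| gives the constants c_l. *)

section \<open>Orthogonal projection onto closed subspaces\<close>

lemma parallelogram_midpoint:
  fixes w x y :: "'a::real_inner"
  shows "(norm (x - y))\<^sup>2
    = 2 * (norm (w - x))\<^sup>2 + 2 * (norm (w - y))\<^sup>2 - 4 * (norm (w - midpoint x y))\<^sup>2"
  unfolding power2_norm_eq_inner midpoint_def
  by (simp add: inner_diff_left inner_diff_right inner_add_left inner_add_right inner_commute
      algebra_simps)

lemma convex_minimizing_sequence_Cauchy:
  fixes S :: "'a::real_inner set"
  assumes "convex S" and v_in: "\<And>n. v n \<in> S"
    and norm_lim: "(\<lambda>n. norm (w - v n)) \<longlonglongrightarrow> infdist w S"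
  shows "Cauchy v"
proof -
  define d where "d = infdist w S"
  define excess where "excess = (\<lambda>n. (norm (w - v n))\<^sup>2 - d\<^sup>2)"
  have excess_lim: "excess \<longlonglongrightarrow> 0"
    using tendsto_diff[OF tendsto_power[OF norm_lim, of 2] tendsto_const[of "d\<^sup>2"]]
    unfolding excess_def d_def by simp
  \<comment> \<open>parallelogram law at the midpoint, which lies in S and so is at least d away from w\<close>
  have close: "(norm (v m - v n))\<^sup>2 \<le> 2 * excess m + 2 * excess n" for m n
  proof -
    have "midpoint (v m) (v n) \<in> S"
      using \<open>convex S\<close> v_in by (simp add: midpoint_def convexD scaleR_add_right)
    then have "d \<le> norm (w - midpoint (v m) (v n))"
      using infdist_le[of _ S w] by (simp add: d_def dist_norm)
    then have "d\<^sup>2 \<le> (norm (w - midpoint (v m) (v n)))\<^sup>2"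
      using infdist_nonneg[of w S] by (simp add: d_def power_mono)
    then show ?thesis
      using parallelogram_midpoint[of "v m" "v n" w] by (simp add: excess_def right_diff_distrib)
  qed
  show "Cauchy v"
  proof (rule metric_CauchyI)
    fix e :: real assume "e > 0"
    then obtain K where K: "\<And>n. n \<ge> K \<Longrightarrow> excess n < e\<^sup>2 / 4"
      using order_tendstoD(2)[OF excess_lim, of "e\<^sup>2 / 4"] by (auto simp: eventually_sequentially)
    have "dist (v m) (v n) < e" if "m \<ge> K" "n \<ge> K" for m n
    proof -
      have "(norm (v m - v n))\<^sup>2 < e\<^sup>2" using close[of m n] K[OF that(1)] K[OF that(2)] by linarith
      then show ?thesis using \<open>e > 0\<close> by (simp add: dist_norm power_less_imp_less_base)
    qed
    then show "\<exists>K. \<forall>m\<ge>K. \<forall>n\<ge>K. dist (v m) (v n) < e" by blast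
  qed
qed

lemma closed_convex_nearest_point_exists:
  fixes S :: "'a::{real_inner, complete_space} set"
  assumes "closed S" "convex S" "S \<noteq> {}"
  shows "\<exists>p\<in>S. \<forall>v\<in>S. norm (w - p) \<le> norm (w - v)"
proof -
  define d where "d = infdist w S"
  have d_le: "d \<le> norm (w - v)" if "v \<in> S" for v
    using infdist_le[OF that, of w] by (simp add: d_def dist_norm)
  have "\<exists>v\<in>S. norm (w - v) < d + 1 / Suc n" for n
  proof -
    have "bdd_below (dist w ` S)" by (rule bdd_belowI[of _ 0]) auto
    moreover have "(INF v\<in>S. dist w v) < d + 1 / Suc n"
      using infdist_notempty[OF \<open>S \<noteq> {}\<close>] by (simp add: d_def)
    ultimately show ?thesis by (simp add: cINF_less_iff[OF \<open>S \<noteq> {}\<close>] dist_norm)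
  qed
  then obtain v where v_in: "v n \<in> S" and v_lt: "norm (w - v n) < d + 1 / Suc n" for n
    by metis
  have norm_lim: "(\<lambda>n. norm (w - v n)) \<longlonglongrightarrow> d"
  proof (rule tendsto_sandwich)
    show "\<forall>\<^sub>F n in sequentially. d \<le> norm (w - v n)" using d_le v_in by simp
    show "\<forall>\<^sub>F n in sequentially. norm (w - v n) \<le> d + 1 / Suc n"
      using v_lt by (intro always_eventually allI less_imp_le)
    show "(\<lambda>n. d + 1 / Suc n) \<longlonglongrightarrow> d"
      using tendsto_add[OF tendsto_const LIMSEQ_inverse_real_of_nat]
      by (simp add: inverse_eq_divide)
  qed simp
  obtain p where p: "v \<longlonglongrightarrow> p"
    using convex_minimizing_sequence_Cauchy[OF \<open>convex S\<close> v_in norm_lim[unfolded d_def]]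
      Cauchy_convergent convergent_def by blast
  have "p \<in> S" using closed_sequentially[OF \<open>closed S\<close>] v_in p by blast
  moreover have "norm (w - p) = d"
    using LIMSEQ_unique[OF tendsto_norm[OF tendsto_diff[OF tendsto_const p]] norm_lim] .
  ultimately show ?thesis using d_le by auto
qed

lemma nearest_point_subspace_orthogonal:
  fixes S :: "'a::real_inner set"
  assumes "subspace S" "p \<in> S" "\<forall>v\<in>S. norm (w - p) \<le> norm (w - v)" "v \<in> S"
  shows "inner (w - p) v = 0"
proof (cases "v = 0")
  case False
  define a where "a = w - p"
  define c where "c = inner a v"
  define t where "t = c / inner v v"
  have "p + t *\<^sub>R v \<in> S" using assms by (simp add: subspace_add subspace_scale)
  then have "(norm a)\<^sup>2 \<le> (norm (a - t *\<^sub>R v))\<^sup>2"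
    using assms(3) by (simp add: a_def power_mono diff_diff_eq)
  also have "\<dots> = (norm a)\<^sup>2 - 2 * t * c + t * t * inner v v"
    unfolding power2_norm_eq_inner c_def
    by (simp add: inner_diff_left inner_diff_right inner_commute algebra_simps)
  also have "\<dots> = (norm a)\<^sup>2 - c\<^sup>2 / inner v v"
    using False by (simp add: t_def power2_eq_square field_simps)
  finally have "c\<^sup>2 / inner v v \<le> 0" by simp
  moreover have "inner v v > 0" using False by simp
  ultimately show ?thesis by (simp add: a_def c_def divide_le_0_iff)
qed simp

lemma orth_proj_eqI:
  fixes S :: "'a::real_inner set"
  assumes "subspace S" "p \<in> S" "\<And>v. v \<in> S \<Longrightarrow> inner (w - p) v = 0"
  shows "orth_proj S w = p"
  unfolding orth_proj_def
proof (rule the_equality)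
  show "p \<in> S \<and> (\<forall>v\<in>S. inner p v = inner w v)" using assms(2,3) by (simp add: inner_diff_left)
  fix q assume q: "q \<in> S \<and> (\<forall>v\<in>S. inner q v = inner w v)"
  then have "q - p \<in> S" using assms by (simp add: subspace_diff)
  then have "inner (q - p) (q - p) = 0" using q assms(3) by (simp add: inner_diff_left)
  then show "q = p" by simp
qed

context
  fixes S :: "'a::{real_inner, complete_space} set"
  assumes subspace: "subspace S" and closed: "closed S"
begin

lemma orth_proj_in: "orth_proj S w \<in> S"
  and orth_proj_orthogonal: "v \<in> S \<Longrightarrow> inner (w - orth_proj S w) v = 0"
proof -
  obtain p where p: "p \<in> S" "\<forall>v\<in>S. norm (w - p) \<le> norm (w - v)"
    using closed_convex_nearest_point_exists[OF closed subspace_imp_convex[OF subspace]]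
      subspace_0[OF subspace] by blast
  then have "orth_proj S w = p"
    using nearest_point_subspace_orthogonal[OF subspace] by (intro orth_proj_eqI[OF subspace]) auto
  then show "orth_proj S w \<in> S" "v \<in> S \<Longrightarrow> inner (w - orth_proj S w) v = 0"
    using p nearest_point_subspace_orthogonal[OF subspace] by auto
qed

lemma orth_proj_pythagoras:
  assumes "v \<in> S"
  shows "(norm (w - v))\<^sup>2 = (norm (w - orth_proj S w))\<^sup>2 + (norm (orth_proj S w - v))\<^sup>2"
proof -
  let ?p = "orth_proj S w"
  have "orthogonal (w - ?p) (?p - v)"
    using assms orth_proj_in subspace unfolding orthogonal_def
    by (intro orth_proj_orthogonal) (simp add: subspace_diff)
  moreover have "w - v = (w - ?p) + (?p - v)" by simp
  ultimately show ?thesis by (metis norm_add_Pythagorean)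
qed

lemma norm_diff_orth_proj_le:
  assumes "v \<in> S" shows "norm (w - orth_proj S w) \<le> norm (w - v)"
proof (rule power2_le_imp_le)
  show "(norm (w - orth_proj S w))\<^sup>2 \<le> (norm (w - v))\<^sup>2"
    using orth_proj_pythagoras[OF assms, of w] zero_le_power2[of "norm (orth_proj S w - v)"]
    by linarith
qed simp

lemma norm_orth_proj_diff_le:
  assumes "v \<in> S" shows "norm (orth_proj S w - v) \<le> norm (w - v)"
proof (rule power2_le_imp_le)
  show "(norm (orth_proj S w - v))\<^sup>2 \<le> (norm (w - v))\<^sup>2"
    using orth_proj_pythagoras[OF assms, of w] zero_le_power2[of "norm (w - orth_proj S w)"]
    by linarith
qed simp

lemma orth_proj_diff: "orth_proj S x - orth_proj S y = orth_proj S (x - y)"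
proof (rule orth_proj_eqI[symmetric, OF subspace])
  show "orth_proj S x - orth_proj S y \<in> S" using orth_proj_in subspace by (simp add: subspace_diff)
  fix v assume "v \<in> S"
  then have "inner (x - orth_proj S x) v - inner (y - orth_proj S y) v = 0"
    by (simp add: orth_proj_orthogonal)
  then show "inner (x - y - (orth_proj S x - orth_proj S y)) v = 0"
    by (simp add: inner_diff_left)
qed

lemma borel_measurable_orth_proj: "orth_proj S \<in> borel_measurable borel"
proof -
  have "norm (orth_proj S x - orth_proj S y) \<le> norm (x - y)" for x y
    using norm_orth_proj_diff_le[OF subspace_0[OF subspace], of "x - y"]
    by (simp add: orth_proj_diff)
  then have "1-lipschitz_on UNIV (orth_proj S)"
    by (intro lipschitz_onI) (simp_all add: dist_norm)
  then show ?thesis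
    using lipschitz_on_continuous_on borel_measurable_continuous_onI by blast
qed

end

lemma orth_proj_zero_space: "orth_proj {0} w = 0"
  by (rule orth_proj_eqI[OF subspace_single_0]) simp_all

lemma Pproj_eq_orth_proj: "Pproj V l = orth_proj (if l \<le> 1 then {0} else V (l - 1))"
  by (simp add: Pproj_def orth_proj_zero_space fun_eq_iff)

section \<open>Square integrable random vectors\<close>

(* The Bochner integral library is stated for the class banach, which the sort
   {real_normed_vector, complete_space} of the theorem does not syntactically belong to.
   Registering products of such types as banach spaces and embedding x into (x, 0) transfers
   the facts needed here. *)
instance prod ::
  ("{real_normed_vector, complete_space}", "{real_normed_vector, complete_space}") banach ..

lemma integrable_Pair_zero_iff:
  fixes f :: "'a \<Rightarrow> 'v::{real_normed_vector, complete_space, second_countable_topology}"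
  shows "integrable M (\<lambda>x. (f x, 0::'v)) \<longleftrightarrow> integrable M f"
proof
  assume "integrable M (\<lambda>x. (f x, 0::'v))"
  from integrable_bounded_linear[OF bounded_linear_fst this] show "integrable M f" by simp
next
  assume "integrable M f"
  then show "integrable M (\<lambda>x. (f x, 0::'v))"
    by (rule integrable_bounded_linear[OF
          bounded_linear_Pair[OF bounded_linear_ident bounded_linear_zero]])
qed

lemma integral_Pair_zero:
  fixes f :: "'a \<Rightarrow> 'v::{real_normed_vector, complete_space, second_countable_topology}"
  shows "integral\<^sup>L M (\<lambda>x. (f x, 0::'v)) = (integral\<^sup>L M f, 0)"
  by (rule integral_bounded_linear'[OF
        bounded_linear_Pair[OF bounded_linear_ident bounded_linear_zero] bounded_linear_fst]) simp

lemma integrable_bound_complete: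
  fixes f :: "'a \<Rightarrow> real"
    and g :: "'a \<Rightarrow> 'v::{real_normed_vector, complete_space, second_countable_topology}"
  assumes "integrable M f" "g \<in> borel_measurable M" "AE x in M. norm (g x) \<le> norm (f x)"
  shows "integrable M g"
  using Bochner_Integration.integrable_bound[OF assms(1), of "\<lambda>x. (g x, 0::'v)"] assms(2,3)
  by (simp add: integrable_Pair_zero_iff)

lemma integral_norm_bound_complete:
  fixes f :: "'a \<Rightarrow> 'v::{real_normed_vector, complete_space, second_countable_topology}"
  shows "norm (integral\<^sup>L M f) \<le> (\<integral>x. norm (f x) \<partial>M)"
  using integral_norm_bound[of M "\<lambda>x. (f x, 0::'v)"] by (simp add: integral_Pair_zero)

lemma
  fixes f :: "'b \<Rightarrow> 'v::{real_normed_vector, complete_space, second_countable_topology}"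
  assumes "g \<in> measurable M N" "f \<in> borel_measurable N"
  shows integral_distr_complete: "integral\<^sup>L (distr M N g) f = (\<integral>x. f (g x) \<partial>M)"
    and integrable_distr_eq_complete: "integrable (distr M N g) f \<longleftrightarrow> integrable M (\<lambda>x. f (g x))"
  using integral_distr[OF assms(1), of "\<lambda>x. (f x, 0::'v)"]
    integrable_distr_eq[OF assms(1), of "\<lambda>x. (f x, 0::'v)"] assms(2)
  by (simp_all add: integral_Pair_zero integrable_Pair_zero_iff)

lemma L2rv_bound:
  fixes f :: "'a \<Rightarrow> 'v::{real_normed_vector, second_countable_topology}"
    and g :: "'a \<Rightarrow> 'u::{real_normed_vector, second_countable_topology}"
  assumes "L2rv M g" "f \<in> borel_measurable M" "\<And>x. x \<in> space M \<Longrightarrow> norm (f x) \<le> c * norm (g x)"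
  shows "L2rv M f"
  unfolding L2rv_def
proof
  show "integrable M (\<lambda>x. (norm (f x))\<^sup>2)"
  proof (rule Bochner_Integration.integrable_bound)
    show "integrable M (\<lambda>x. c\<^sup>2 * (norm (g x))\<^sup>2)" using assms(1) by (simp add: L2rv_def)
    show "(\<lambda>x. (norm (f x))\<^sup>2) \<in> borel_measurable M" using assms(2) by measurable
    have "(norm (f x))\<^sup>2 \<le> c\<^sup>2 * (norm (g x))\<^sup>2" if "x \<in> space M" for x
      using power_mono[OF assms(3)[OF that] norm_ge_zero] by (simp add: power_mult_distrib)
    then show "AE x in M. norm ((norm (f x))\<^sup>2) \<le> norm (c\<^sup>2 * (norm (g x))\<^sup>2)" by (simp add: AE_I2)
  qed
qed fact

lemma L2rv_add:
  fixes f g :: "'a \<Rightarrow> 'v::{real_normed_vector, second_countable_topology}"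
  assumes f: "L2rv M f" and g: "L2rv M g"
  shows "L2rv M (\<lambda>x. f x + g x)"
  unfolding L2rv_def
proof
  have [measurable]: "f \<in> borel_measurable M" "g \<in> borel_measurable M"
    using f g by (simp_all add: L2rv_def)
  show "(\<lambda>x. f x + g x) \<in> borel_measurable M" by measurable
  show "integrable M (\<lambda>x. (norm (f x + g x))\<^sup>2)"
  proof (rule Bochner_Integration.integrable_bound)
    show "integrable M (\<lambda>x. 2 * (norm (f x))\<^sup>2 + 2 * (norm (g x))\<^sup>2)"
      using f g by (simp add: L2rv_def)
    show "(\<lambda>x. (norm (f x + g x))\<^sup>2) \<in> borel_measurable M" by measurable
    have "(norm (f x + g x))\<^sup>2 \<le> 2 * (norm (f x))\<^sup>2 + 2 * (norm (g x))\<^sup>2" for x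
    proof -
      have "(norm (f x + g x))\<^sup>2 \<le> (norm (f x) + norm (g x))\<^sup>2"
        by (rule power_mono[OF norm_triangle_ineq norm_ge_zero])
      also have "\<dots> \<le> 2 * (norm (f x))\<^sup>2 + 2 * (norm (g x))\<^sup>2"
        using zero_le_power2[of "norm (f x) - norm (g x)"]
        by (simp add: power2_eq_square algebra_simps)
      finally show ?thesis .
    qed
    then show "AE x in M. norm ((norm (f x + g x))\<^sup>2) \<le> norm (2 * (norm (f x))\<^sup>2 + 2 * (norm (g x))\<^sup>2)"
      by simp
  qed
qed

lemma L2rv_scaleR:
  fixes f :: "'a \<Rightarrow> 'v::{real_normed_vector, second_countable_topology}"
  assumes "L2rv M f" shows "L2rv M (\<lambda>x. c *\<^sub>R f x)"
proof (rule L2rv_bound[OF assms, where c="\<bar>c\<bar>"])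
  have [measurable]: "f \<in> borel_measurable M" using assms by (simp add: L2rv_def)
  show "(\<lambda>x. c *\<^sub>R f x) \<in> borel_measurable M" by measurable
qed simp

lemma L2rv_diff:
  fixes f g :: "'a \<Rightarrow> 'v::{real_normed_vector, second_countable_topology}"
  assumes "L2rv M f" "L2rv M g" shows "L2rv M (\<lambda>x. f x - g x)"
  using L2rv_add[OF assms(1) L2rv_scaleR[OF assms(2), of "-1"]] by simp

lemma L2rv_sum:
  fixes f :: "'i \<Rightarrow> 'a \<Rightarrow> 'v::{real_normed_vector, second_countable_topology}"
  assumes "finite I" "\<And>i. i \<in> I \<Longrightarrow> L2rv M (f i)"
  shows "L2rv M (\<lambda>x. \<Sum>i\<in>I. f i x)"
  using assms
proof (induction I rule: finite_induct)
  case empty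
  show ?case by (simp add: L2rv_def)
next
  case (insert i I)
  then show ?case by (simp add: L2rv_add)
qed

lemma integrable_inner_L2rv:
  fixes f g :: "'a \<Rightarrow> 'v::{real_inner, second_countable_topology}"
  assumes f: "L2rv M f" and g: "L2rv M g"
  shows "integrable M (\<lambda>x. inner (f x) (g x))"
proof (rule Bochner_Integration.integrable_bound)
  have [measurable]: "f \<in> borel_measurable M" "g \<in> borel_measurable M"
    using f g by (simp_all add: L2rv_def)
  show "integrable M (\<lambda>x. (norm (f x))\<^sup>2 + (norm (g x))\<^sup>2)" using f g by (simp add: L2rv_def)
  show "(\<lambda>x. inner (f x) (g x)) \<in> borel_measurable M" by measurable
  have "\<bar>inner (f x) (g x)\<bar> \<le> (norm (f x))\<^sup>2 + (norm (g x))\<^sup>2" for x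
    using Cauchy_Schwarz_ineq2[of "f x" "g x"] zero_le_power2[of "norm (f x) - norm (g x)"]
      mult_nonneg_nonneg[OF norm_ge_zero norm_ge_zero, of "f x" "g x"]
    by (simp add: power2_eq_square algebra_simps)
  then show "AE x in M. norm (inner (f x) (g x)) \<le> norm ((norm (f x))\<^sup>2 + (norm (g x))\<^sup>2)" by simp
qed

lemma L2norm_squared: "(L2norm M f)\<^sup>2 = (\<integral>x. (norm (f x))\<^sup>2 \<partial>M)"
  by (simp add: L2norm_def integral_nonneg_AE)

lemma L2norm_norm [simp]: "L2norm M (\<lambda>x. norm (f x)) = L2norm M f"
  by (simp add: L2norm_def)

lemma L2rv_norm:
  fixes f :: "'a \<Rightarrow> 'v::{real_normed_vector, second_countable_topology}"
  assumes "L2rv M f" shows "L2rv M (\<lambda>x. norm (f x))"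
proof -
  have [measurable]: "f \<in> borel_measurable M" using assms by (simp add: L2rv_def)
  have "(\<lambda>x. norm (f x)) \<in> borel_measurable M" by measurable
  then show ?thesis using assms by (simp add: L2rv_def)
qed

lemma Cauchy_Schwarz_L2norm:
  fixes f g :: "'a \<Rightarrow> real"
  assumes f: "L2rv M f" and g: "L2rv M g"
  shows "(\<integral>x. \<bar>f x * g x\<bar> \<partial>M) \<le> L2norm M f * L2norm M g"
proof -
  have [measurable]: "f \<in> borel_measurable M" "g \<in> borel_measurable M"
    using f g by (simp_all add: L2rv_def)
  have int: "integrable M (\<lambda>x. \<bar>f x * g x\<bar>)"
    using integrable_norm[OF integrable_inner_L2rv[OF f g]] by simp
  have nn: "(\<integral>\<^sup>+x. ennreal (h x) \<partial>M) = ennreal (integral\<^sup>L M h)"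
    if "integrable M h" "\<And>x. 0 \<le> h x" for h :: "'a \<Rightarrow> real"
    using nn_integral_eq_integral[OF that(1)] that(2) by simp
  have "(\<integral>\<^sup>+x. ennreal \<bar>f x\<bar> * ennreal \<bar>g x\<bar> \<partial>M)\<^sup>2
      \<le> (\<integral>\<^sup>+x. ennreal \<bar>f x\<bar> ^ 2 \<partial>M) * (\<integral>\<^sup>+x. ennreal \<bar>g x\<bar> ^ 2 \<partial>M)"
    by (rule Cauchy_Schwarz_nn_integral) measurable
  then have "ennreal ((\<integral>x. \<bar>f x * g x\<bar> \<partial>M)\<^sup>2)
      \<le> ennreal ((\<integral>x. (f x)\<^sup>2 \<partial>M) * (\<integral>x. (g x)\<^sup>2 \<partial>M))"
    using f g int
    by (simp add: L2rv_def nn ennreal_power ennreal_mult[symmetric] abs_mult integral_nonneg_AE)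
  then have "(\<integral>x. \<bar>f x * g x\<bar> \<partial>M)\<^sup>2 \<le> (\<integral>x. (f x)\<^sup>2 \<partial>M) * (\<integral>x. (g x)\<^sup>2 \<partial>M)"
    by (simp add: integral_nonneg_AE)
  then show ?thesis by (simp add: L2norm_def real_le_rsqrt real_sqrt_mult[symmetric])
qed

lemma L2norm_diff_le:
  fixes f g :: "'a \<Rightarrow> 'v::{real_normed_vector, second_countable_topology}"
  assumes f: "L2rv M f" and g: "L2rv M g"
  shows "L2norm M (\<lambda>x. f x - g x) \<le> L2norm M f + L2norm M g"
proof -
  have int: "integrable M (\<lambda>x. (norm (f x))\<^sup>2)" "integrable M (\<lambda>x. (norm (g x))\<^sup>2)"
    "integrable M (\<lambda>x. (norm (f x - g x))\<^sup>2)" "integrable M (\<lambda>x. \<bar>norm (f x) * norm (g x)\<bar>)"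
    using f g L2rv_diff[OF f g]
      integrable_norm[OF integrable_inner_L2rv[OF L2rv_norm[OF f] L2rv_norm[OF g]]]
    by (simp_all add: L2rv_def)
  have "(\<integral>x. (norm (f x - g x))\<^sup>2 \<partial>M)
      \<le> (\<integral>x. (norm (f x))\<^sup>2 + 2 * \<bar>norm (f x) * norm (g x)\<bar> + (norm (g x))\<^sup>2 \<partial>M)"
  proof (rule integral_mono)
    fix x
    have "(norm (f x - g x))\<^sup>2 \<le> (norm (f x) + norm (g x))\<^sup>2"
      by (rule power_mono[OF norm_triangle_ineq4 norm_ge_zero])
    then show "(norm (f x - g x))\<^sup>2 \<le> (norm (f x))\<^sup>2 + 2 * \<bar>norm (f x) * norm (g x)\<bar> + (norm (g x))\<^sup>2"
      by (simp add: power2_eq_square algebra_simps)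
  qed (use int in simp_all)
  also have "\<dots> = (L2norm M f)\<^sup>2 + 2 * (\<integral>x. \<bar>norm (f x) * norm (g x)\<bar> \<partial>M) + (L2norm M g)\<^sup>2"
    using int by (simp add: L2norm_def integral_nonneg_AE)
  also have "\<dots> \<le> (L2norm M f)\<^sup>2 + 2 * (L2norm M f * L2norm M g) + (L2norm M g)\<^sup>2"
    using Cauchy_Schwarz_L2norm[OF L2rv_norm[OF f] L2rv_norm[OF g]] by simp
  also have "\<dots> = (L2norm M f + L2norm M g)\<^sup>2" by (simp add: power2_eq_square algebra_simps)
  finally have "sqrt (\<integral>x. (norm (f x - g x))\<^sup>2 \<partial>M) \<le> sqrt ((L2norm M f + L2norm M g)\<^sup>2)"
    by (rule real_sqrt_le_mono)
  then show ?thesis by (simp add: L2norm_def)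
qed

lemma
  fixes X Y :: "'a \<Rightarrow> 'v::{real_normed_vector, second_countable_topology}"
    and g :: "'v \<Rightarrow> 'c::{real_normed_vector, complete_space, second_countable_topology}"
  assumes [measurable]: "X \<in> borel_measurable M" "Y \<in> borel_measurable M"
      "g \<in> borel_measurable borel"
    and same: "distr M borel X = distr M borel Y"
  shows integral_comp_eq_if_distr_eq:
      "(\<integral>\<omega>. g (X \<omega>) \<partial>M) = (\<integral>\<omega>. g (Y \<omega>) \<partial>M)"
    and integrable_comp_iff_distr_eq:
      "integrable M (\<lambda>\<omega>. g (X \<omega>)) \<longleftrightarrow> integrable M (\<lambda>\<omega>. g (Y \<omega>))"
  using integral_distr_complete[of X M borel g] integral_distr_complete[of Y M borel g]
    integrable_distr_eq_complete[of X M borel g] integrable_distr_eq_complete[of Y M borel g]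
  by (simp_all add: same)

lemma L2rv_if_distr_eq:
  fixes X Y :: "'a \<Rightarrow> 'v::{real_normed_vector, second_countable_topology}"
  assumes "X \<in> borel_measurable M" "L2rv M Y" "distr M borel X = distr M borel Y"
  shows "L2rv M X"
  using assms integrable_comp_iff_distr_eq[OF assms(1) _ _ assms(3), of "\<lambda>v. (norm v)\<^sup>2"]
  by (simp add: L2rv_def)

context prob_space
begin

lemma expectation_const [simp]:
  fixes c :: "'v::{real_normed_vector, second_countable_topology}"
  shows "(\<integral>x. c \<partial>M) = c"
  using integral_scaleR_left[of c M "\<lambda>_. 1"] by (simp add: prob_space)

lemma L2rv_const [simp]:
  fixes c :: "'v::{real_normed_vector, second_countable_topology}"
  shows "L2rv M (\<lambda>_. c)"
  by (simp add: L2rv_def)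

lemma integrable_L2rv:
  fixes f :: "'a \<Rightarrow> 'v::{real_normed_vector, complete_space, second_countable_topology}"
  assumes "L2rv M f" shows "integrable M f"
proof (rule integrable_bound_complete)
  show "integrable M (\<lambda>x. 1 + (norm (f x))\<^sup>2)" using assms by (simp add: L2rv_def)
  show "f \<in> borel_measurable M" using assms by (simp add: L2rv_def)
  have "norm (f x) \<le> 1 + (norm (f x))\<^sup>2" for x
  proof -
    have "2 * norm (f x) \<le> 1 + (norm (f x))\<^sup>2"
      using zero_le_power2[of "norm (f x) - 1"] by (simp add: power2_eq_square algebra_simps)
    then show ?thesis using norm_ge_zero[of "f x"] by linarith
  qed
  then show "AE x in M. norm (f x) \<le> norm (1 + (norm (f x))\<^sup>2)" by simp
qed

lemma integral_norm_le_L2norm: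
  fixes f :: "'a \<Rightarrow> 'v::{real_normed_vector, second_countable_topology}"
  assumes "L2rv M f" shows "(\<integral>x. norm (f x) \<partial>M) \<le> L2norm M f"
  using Cauchy_Schwarz_L2norm[OF L2rv_norm[OF assms] L2rv_const[of 1]]
  by (simp add: L2norm_def prob_space)

lemma integral_norm_diff_squared:
  fixes X :: "'a \<Rightarrow> 'v::{real_inner, complete_space, second_countable_topology}"
  assumes X: "L2rv M X"
  shows "(\<integral>\<omega>. (norm (X \<omega> - c))\<^sup>2 \<partial>M)
    = (\<integral>\<omega>. (norm (X \<omega> - integral\<^sup>L M X))\<^sup>2 \<partial>M) + (norm (integral\<^sup>L M X - c))\<^sup>2"
proof -
  let ?m = "integral\<^sup>L M X"
  have split: "(norm (X \<omega> - c))\<^sup>2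
      = (norm (X \<omega> - ?m))\<^sup>2 + 2 * (inner (X \<omega>) (?m - c) - inner ?m (?m - c)) + (norm (?m - c))\<^sup>2"
    for \<omega>
  proof -
    have "(X \<omega> - ?m) + (?m - c) = X \<omega> - c" by simp
    then have "inner (X \<omega> - ?m) (?m - c)
        = ((norm (X \<omega> - c))\<^sup>2 - (norm (X \<omega> - ?m))\<^sup>2 - (norm (?m - c))\<^sup>2) / 2"
      using dot_norm[of "X \<omega> - ?m" "?m - c"] by simp
    then show ?thesis unfolding inner_diff_left by (simp add: field_simps)
  qed
  have "(\<integral>\<omega>. (norm (X \<omega> - c))\<^sup>2 \<partial>M) = (\<integral>\<omega>. (norm (X \<omega> - ?m))\<^sup>2
      + 2 * (inner (X \<omega>) (?m - c) - inner ?m (?m - c)) + (norm (?m - c))\<^sup>2 \<partial>M)"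
    by (simp only: split)
  moreover have "integrable M (\<lambda>\<omega>. (norm (X \<omega> - ?m))\<^sup>2)"
    using L2rv_diff[OF X L2rv_const] by (simp add: L2rv_def)
  moreover have "(\<integral>\<omega>. inner (X \<omega>) (?m - c) \<partial>M) = inner ?m (?m - c)"
    using integrable_L2rv[OF X] by simp
  ultimately show ?thesis
    using integrable_L2rv[OF X] by (simp add: prob_space)
qed

lemma indep_vars_indep_var:
  assumes "indep_vars M' X I" "i \<in> I" "j \<in> I" "i \<noteq> j"
  shows "indep_var (M' i) (X i) (M' j) (X j)"
proof -
  have "indep_var (M' i) ((\<lambda>f. f i) \<circ> (\<lambda>\<omega>. restrict (\<lambda>i. X i \<omega>) {i}))
      (M' j) ((\<lambda>f. f j) \<circ> (\<lambda>\<omega>. restrict (\<lambda>i. X i \<omega>) {j}))"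
    using assms
    by (intro indep_var_compose[OF indep_var_restrict[OF assms(1)]] measurable_component_singleton)
       auto
  then show ?thesis by (simp add: comp_def)
qed

lemma indep_var_integral_inner:
  fixes X Y :: "'a \<Rightarrow> 'v::{real_inner, complete_space, second_countable_topology}"
  assumes ind: "indep_var borel X borel Y"
    and X: "integrable M X" and Y: "integrable M Y" and XY: "integrable M (\<lambda>\<omega>. inner (X \<omega>) (Y \<omega>))"
  shows "(\<integral>\<omega>. inner (X \<omega>) (Y \<omega>) \<partial>M) = inner (integral\<^sup>L M X) (integral\<^sup>L M Y)"
proof -
  have [measurable]: "X \<in> borel_measurable M" "Y \<in> borel_measurable M"
    using ind by (auto dest: indep_var_rv1 indep_var_rv2)
  let ?PX = "distr M borel X" and ?PY = "distr M borel Y"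
  interpret PX: prob_space ?PX by (rule prob_space_distr) simp
  interpret PY: prob_space ?PY by (rule prob_space_distr) simp
  interpret PXY: pair_prob_space ?PX ?PY ..
  have joint: "?PX \<Otimes>\<^sub>M ?PY = distr M (borel \<Otimes>\<^sub>M borel) (\<lambda>\<omega>. (X \<omega>, Y \<omega>))"
    using ind indep_var_distribution_eq by blast
  have "integrable (?PX \<Otimes>\<^sub>M ?PY) (\<lambda>p. inner (fst p) (snd p))"
    unfolding joint using XY by (subst integrable_distr_eq) simp_all
  then have "(\<integral>\<omega>. inner (X \<omega>) (Y \<omega>) \<partial>M) = (\<integral>x. (\<integral>y. inner x y \<partial>?PY) \<partial>?PX)"
    using PXY.integral_fst'[of "\<lambda>p. inner (fst p) (snd p)"] unfolding joint
    by (simp add: integral_distr)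
  also have "\<dots> = (\<integral>x. inner x (integral\<^sup>L M Y) \<partial>?PX)"
    using Y by (simp add: integrable_distr_eq_complete integral_distr_complete)
  also have "\<dots> = inner (integral\<^sup>L M X) (integral\<^sup>L M Y)"
    using X by (simp add: integrable_distr_eq_complete integral_distr_complete)
  finally show ?thesis .
qed

lemma integral_norm_sum_squared:
  fixes D :: "'i \<Rightarrow> 'a \<Rightarrow> 'v::{real_inner, complete_space, second_countable_topology}"
  assumes "finite I" "\<And>i. i \<in> I \<Longrightarrow> L2rv M (D i)"
  shows "(\<integral>\<omega>. (norm (\<Sum>i\<in>I. D i \<omega>))\<^sup>2 \<partial>M) = (\<Sum>i\<in>I. \<Sum>j\<in>I. \<integral>\<omega>. inner (D i \<omega>) (D j \<omega>) \<partial>M)"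
proof -
  have "(norm (\<Sum>i\<in>I. D i \<omega>))\<^sup>2 = (\<Sum>i\<in>I. \<Sum>j\<in>I. inner (D i \<omega>) (D j \<omega>))" for \<omega>
    by (simp add: power2_norm_eq_inner inner_sum_left inner_sum_right inner_commute)
  then show ?thesis
    using assms by (simp add: integrable_inner_L2rv)
qed

lemma integral_norm_sum_centered_indep:
  fixes Y :: "'i \<Rightarrow> 'a \<Rightarrow> 'v::{real_inner, complete_space, second_countable_topology}"
  assumes I: "finite I" and indep: "indep_vars (\<lambda>_. borel) Y I" and Y: "\<And>i. i \<in> I \<Longrightarrow> L2rv M (Y i)"
  shows "(\<integral>\<omega>. (norm (\<Sum>i\<in>I. Y i \<omega> - integral\<^sup>L M (Y i)))\<^sup>2 \<partial>M)
    = (\<Sum>i\<in>I. \<integral>\<omega>. (norm (Y i \<omega> - integral\<^sup>L M (Y i)))\<^sup>2 \<partial>M)"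
proof -
  define D where "D i = (\<lambda>\<omega>. Y i \<omega> - integral\<^sup>L M (Y i))" for i
  have D: "L2rv M (D i)" if "i \<in> I" for i
    unfolding D_def by (rule L2rv_diff[OF Y[OF that] L2rv_const])
  have D_mean: "integral\<^sup>L M (D i) = 0" if "i \<in> I" for i
    using integrable_L2rv[OF Y[OF that]] by (simp add: D_def)
  have D_indep: "indep_vars (\<lambda>_. borel) D I"
    unfolding D_def[abs_def] by (rule indep_vars_compose2[OF indep]) measurable
  have "(\<Sum>j\<in>I. \<integral>\<omega>. inner (D i \<omega>) (D j \<omega>) \<partial>M) = (\<integral>\<omega>. (norm (D i \<omega>))\<^sup>2 \<partial>M)"
    if i: "i \<in> I" for i
  proof -
    have "(\<integral>\<omega>. inner (D i \<omega>) (D j \<omega>) \<partial>M) = 0" if j: "j \<in> I - {i}" for j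
    proof -
      have "(\<integral>\<omega>. inner (D i \<omega>) (D j \<omega>) \<partial>M) = inner (integral\<^sup>L M (D i)) (integral\<^sup>L M (D j))"
        using i j D
        by (intro indep_var_integral_inner indep_vars_indep_var[OF D_indep] integrable_L2rv
            integrable_inner_L2rv) auto
      then show ?thesis using i j D_mean by simp
    qed
    then show ?thesis
      using I i by (simp add: sum.remove[of I i] power2_norm_eq_inner)
  qed
  then show ?thesis
    using integral_norm_sum_squared[OF I D] by (simp add: D_def)
qed

end

section \<open>The projected multilevel Monte Carlo estimator\<close>

lemma sum_adjacent_bound:
  fixes t b e :: "nat \<Rightarrow> real"
  assumes L: "1 \<le> L" and t_nonneg: "\<And>l. 0 \<le> t l"
    and b_le: "\<And>l. l \<in> {1..L} \<Longrightarrow> b l \<le> e l + e (l - 1)"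
  shows "(\<Sum>l = 1..L. t l * b l)
    \<le> t 1 * e 0 + (\<Sum>l = 1..L. (t l + (if l < L then t (Suc l) else 0)) * e l)"
proof -
  have "(\<Sum>l = 1..L. t l * b l) \<le> (\<Sum>l = 1..L. t l * (e l + e (l - 1)))"
    by (intro sum_mono mult_left_mono b_le t_nonneg)
  also have "\<dots> = (\<Sum>l = 1..L. t l * e l) + (\<Sum>l = 0..L - 1. t (Suc l) * e l)"
    using sum.shift_bounds_cl_Suc_ivl[of "\<lambda>l. t l * e (l - 1)" 0 "L - 1"] L
    by (simp add: sum.distrib distrib_left)
  also have "(\<Sum>l = 0..L - 1. t (Suc l) * e l)
      = t 1 * e 0 + (\<Sum>l = 1..L. (if l < L then t (Suc l) else 0) * e l)"
  proof -
    have "{0..L - 1} = insert 0 {1..L - 1}" "{1..L} = insert L {1..L - 1}" using L by auto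
    moreover have "(\<Sum>l = 1..L - 1. (if l < L then t (Suc l) else 0) * e l)
        = (\<Sum>l = 1..L - 1. t (Suc l) * e l)"
      by (rule sum.cong) auto
    ultimately show ?thesis using L by simp
  qed
  finally show ?thesis by (simp add: sum.distrib distrib_right)
qed

lemma pmlmc_constants_bound:
  fixes a e :: "nat \<Rightarrow> real"
  assumes L: "L \<ge> 2" and e_nonneg: "\<And>l. 0 \<le> e l"
    and a_le: "\<And>l. l \<in> {1..L} \<Longrightarrow> a l \<le> e l + e (l - 1)"
  shows "(\<Sum>l = 1..L. a l / sqrt (N l)) + e L + (\<Sum>l = 2..L. a l)
    \<le> c0 L N * e 0 + (\<Sum>l = 1..L. cl L N l * e l)"
proof -
  define s where "s l = 1 / sqrt (real (N l))" for l
  define t where "t l = s l + (if l = 1 then 0 else 1)" for l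
  have s_nonneg: "0 \<le> s l" for l by (simp add: s_def)
  have "{1..L} = insert 1 {2..L}" using L by auto
  then have "(\<Sum>l = 2..L. a l) = (\<Sum>l = 1..L. (if l = 1 then 0 else 1) * a l)"
    by (auto intro!: sum.cong)
  moreover have "e L = (\<Sum>l = 1..L. (if l = L then 1 else 0) * e l)"
  proof -
    have "(\<Sum>l = 1..L. (if l = L then 1 else 0) * e l) = (\<Sum>l = 1..L. if l = L then e l else 0)"
      by (rule sum.cong) auto
    then show ?thesis using L by simp
  qed
  ultimately have "(\<Sum>l = 1..L. a l / sqrt (N l)) + e L + (\<Sum>l = 2..L. a l)
      = (\<Sum>l = 1..L. t l * a l) + (\<Sum>l = 1..L. (if l = L then 1 else 0) * e l)"
    by (simp add: t_def s_def sum.distrib algebra_simps)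
  also have "\<dots> \<le> t 1 * e 0 + (\<Sum>l = 1..L. (t l + (if l < L then t (Suc l) else 0)) * e l)
      + (\<Sum>l = 1..L. (if l = L then 1 else 0) * e l)"
    using L s_nonneg by (intro add_right_mono sum_adjacent_bound a_le) (simp_all add: t_def)
  also have "\<dots> \<le> c0 L N * e 0 + (\<Sum>l = 1..L. cl L N l * e l)"
    unfolding add.assoc sum.distrib[symmetric] distrib_right[symmetric]
  proof (intro add_mono mult_right_mono sum_mono e_nonneg)
    show "t 1 \<le> c0 L N"
      using sum_nonneg[of "{2..L}" s] s_nonneg by (simp add: t_def c0_def s_def)
    have "cl L N l = (if l = 1 then 1 + s 1 + 2 * s 2 else if l = L then 2 + 2 * s L
        else 2 + 2 * s l + 2 * s (Suc l))" for l
      by (simp add: cl_def s_def)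
    moreover fix l assume "l \<in> {1..L}"
    ultimately show "t l + ((if l < L then t (Suc l) else 0) + (if l = L then 1 else 0)) \<le> cl L N l"
      using L by (auto simp: t_def numeral_2_eq_2 s_nonneg)
  qed
  finally show ?thesis .
qed

locale pmlmc = prob_space M for M :: "'w measure" +
  fixes V :: "nat \<Rightarrow> 'v::{real_inner, complete_space, second_countable_topology} set"
    and L :: nat and N :: "nat \<Rightarrow> nat"
    and u :: "'w \<Rightarrow> 'v" and ul :: "nat \<Rightarrow> 'w \<Rightarrow> 'v" and Xs :: "nat \<Rightarrow> nat \<Rightarrow> 'w \<Rightarrow> 'v"
  assumes N_pos: "l \<in> {1..L} \<Longrightarrow> N l > 0"
    and V_closed_subspace: "l \<in> {1..L} \<Longrightarrow> subspace (V l) \<and> closed (V l)"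
    and L2rv_u: "L2rv M u"
    and L2rv_ul: "l \<in> {1..L} \<Longrightarrow> L2rv M (ul l)"
    and ul_in_V: "l \<in> {1..L} \<Longrightarrow> \<omega> \<in> space M \<Longrightarrow> ul l \<omega> \<in> V l"
    and Xs_measurable: "l \<in> {1..L} \<Longrightarrow> k \<in> {1..N l} \<Longrightarrow> Xs l k \<in> borel_measurable M"
    and Xs_distr: "l \<in> {1..L} \<Longrightarrow> k \<in> {1..N l} \<Longrightarrow> distr M borel (Xs l k) = distr M borel (ul l)"
    and Xs_indep: "indep_vars (\<lambda>_. borel) (\<lambda>(l, k). Xs l k) (SIGMA l:{1..L}. {1..N l})"
begin

(* ul0 adds the level u_0 = 0; coarse l is the range V_(l-1) of P_l (with P_1 = 0 the projection
   onto {0}); detail l is I - P_l; sample_term (l, k) is the summand N_l^-1 (I - P_l) u_l^(l,k) of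
   the estimator. *)
definition ul0 :: "nat \<Rightarrow> 'w \<Rightarrow> 'v" where
  "ul0 l = (if l = 0 then (\<lambda>_. 0) else ul l)"

definition coarse :: "nat \<Rightarrow> 'v set" where
  "coarse l = (if l \<le> 1 then {0} else V (l - 1))"

definition detail :: "nat \<Rightarrow> 'v \<Rightarrow> 'v" where
  "detail l x = x - Pproj V l x"

definition sample_term :: "nat \<times> nat \<Rightarrow> 'w \<Rightarrow> 'v" where
  "sample_term i \<omega> = (1 / real (N (fst i))) *\<^sub>R detail (fst i) (Xs (fst i) (snd i) \<omega>)"

lemma coarse_closed_subspace:
  assumes "l \<in> {1..L}" shows "subspace (coarse l)" "closed (coarse l)"
proof (atomize(full), cases "l \<le> 1")
  case False
  then have "l - 1 \<in> {1..L}" using assms by auto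
  then show "subspace (coarse l) \<and> closed (coarse l)"
    using V_closed_subspace False by (simp add: coarse_def)
qed (simp add: coarse_def subspace_single_0)

lemma detail_eq: "detail l x = x - orth_proj (coarse l) x"
  by (simp add: detail_def coarse_def Pproj_eq_orth_proj)

lemma ul0_prev_in_coarse:
  assumes "l \<in> {1..L}" "\<omega> \<in> space M" shows "ul0 (l - 1) \<omega> \<in> coarse l"
proof (cases "l \<le> 1")
  case False
  then have "l - 1 \<in> {1..L}" using assms by auto
  then show ?thesis using ul_in_V assms(2) False by (simp add: ul0_def coarse_def)
qed (simp add: ul0_def coarse_def)

lemma L2rv_ul0: "l \<le> L \<Longrightarrow> L2rv M (ul0 l)"
  by (auto simp: ul0_def L2rv_ul)

lemma borel_measurable_detail: "l \<in> {1..L} \<Longrightarrow> detail l \<in> borel_measurable borel"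
  using borel_measurable_orth_proj[OF coarse_closed_subspace] by (simp add: detail_eq[abs_def])

lemma norm_detail_le: "l \<in> {1..L} \<Longrightarrow> v \<in> coarse l \<Longrightarrow> norm (detail l x) \<le> norm (x - v)"
  using norm_diff_orth_proj_le[OF coarse_closed_subspace] by (simp add: detail_eq)

lemma L2rv_detail:
  assumes l: "l \<in> {1..L}" and Y: "L2rv M Y"
  shows "L2rv M (\<lambda>\<omega>. detail l (Y \<omega>))"
proof (rule L2rv_bound[OF Y, where c=1])
  have [measurable]: "detail l \<in> borel_measurable borel" "Y \<in> borel_measurable M"
    using borel_measurable_detail[OF l] Y by (simp_all add: L2rv_def)
  show "(\<lambda>\<omega>. detail l (Y \<omega>)) \<in> borel_measurable M" by measurable
  show "norm (detail l (Y \<omega>)) \<le> 1 * norm (Y \<omega>)" for \<omega>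
    using norm_detail_le[OF l subspace_0[OF coarse_closed_subspace(1)[OF l]]] by simp
qed

lemma L2rv_Xs: "l \<in> {1..L} \<Longrightarrow> k \<in> {1..N l} \<Longrightarrow> L2rv M (Xs l k)"
  using L2rv_if_distr_eq[OF Xs_measurable L2rv_ul Xs_distr] .

lemma integral_comp_detail_Xs:
  fixes g :: "'v \<Rightarrow> 'c::{real_normed_vector, complete_space, second_countable_topology}"
  assumes l: "l \<in> {1..L}" and k: "k \<in> {1..N l}" and [measurable]: "g \<in> borel_measurable borel"
  shows "(\<integral>\<omega>. g (detail l (Xs l k \<omega>)) \<partial>M) = (\<integral>\<omega>. g (detail l (ul l \<omega>)) \<partial>M)"
proof -
  have [measurable]: "detail l \<in> borel_measurable borel" by (rule borel_measurable_detail[OF l])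
  show ?thesis
    using integral_comp_eq_if_distr_eq[OF Xs_measurable[OF l k] _ _ Xs_distr[OF l k],
        of "\<lambda>v. g (detail l v)"] L2rv_ul[OF l]
    by (simp add: L2rv_def)
qed

lemma L2rv_sample_term: "i \<in> (SIGMA l:{1..L}. {1..N l}) \<Longrightarrow> L2rv M (sample_term i)"
  unfolding sample_term_def[abs_def] by (auto intro!: L2rv_scaleR L2rv_detail L2rv_Xs)

lemma sample_terms_indep: "indep_vars (\<lambda>_. borel) sample_term (SIGMA l:{1..L}. {1..N l})"
proof -
  have "indep_vars (\<lambda>_. borel)
      (\<lambda>i \<omega>. (\<lambda>v. (1 / real (N (fst i))) *\<^sub>R detail (fst i) v) ((\<lambda>(l, k). Xs l k) i \<omega>))
      (SIGMA l:{1..L}. {1..N l})"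
  proof (rule indep_vars_compose2[OF Xs_indep])
    fix i assume "i \<in> (SIGMA l:{1..L}. {1..N l})"
    then have [measurable]: "detail (fst i) \<in> borel_measurable borel"
      by (auto intro: borel_measurable_detail)
    show "(\<lambda>v. (1 / real (N (fst i))) *\<^sub>R detail (fst i) v) \<in> borel \<rightarrow>\<^sub>M borel" by measurable
  qed
  then show ?thesis by (simp add: sample_term_def[abs_def] split_def)
qed

lemma E_PML_eq_sum_sample_terms:
  "E_PML V L N Xs \<omega> = (\<Sum>i\<in>(SIGMA l:{1..L}. {1..N l}). sample_term i \<omega>)"
  by (simp add: E_PML_def sample_term_def detail_def scaleR_sum_right sum.Sigma split_def)

lemma integral_sample_term:
  "i \<in> (SIGMA l:{1..L}. {1..N l}) \<Longrightarrow>
    integral\<^sup>L M (sample_term i) = (1 / real (N (fst i))) *\<^sub>R (\<integral>\<omega>. detail (fst i) (ul (fst i) \<omega>) \<partial>M)"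
  unfolding sample_term_def[abs_def]
  by (auto simp: integral_comp_detail_Xs[where g="\<lambda>v. v"])

lemma integral_norm_sample_term_le:
  assumes i: "i \<in> (SIGMA l:{1..L}. {1..N l})"
  shows "(\<integral>\<omega>. (norm (sample_term i \<omega>))\<^sup>2 \<partial>M)
    \<le> (L2norm M (\<lambda>\<omega>. ul0 (fst i) \<omega> - ul0 (fst i - 1) \<omega>))\<^sup>2 / (real (N (fst i)))\<^sup>2"
proof -
  obtain l k where lk: "i = (l, k)" "l \<in> {1..L}" "k \<in> {1..N l}" using i by auto
  have L2: "L2rv M (\<lambda>\<omega>. ul0 l \<omega> - ul0 (l - 1) \<omega>)"
    using lk(2) by (intro L2rv_diff L2rv_ul0) auto
  have "(\<integral>\<omega>. (norm (sample_term i \<omega>))\<^sup>2 \<partial>M)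
      = (\<integral>\<omega>. (norm (detail l (Xs l k \<omega>)))\<^sup>2 \<partial>M) / (real (N l))\<^sup>2"
    using lk by (simp add: sample_term_def power_mult_distrib power_divide)
  also have "(\<integral>\<omega>. (norm (detail l (Xs l k \<omega>)))\<^sup>2 \<partial>M) = (\<integral>\<omega>. (norm (detail l (ul l \<omega>)))\<^sup>2 \<partial>M)"
    using lk by (intro integral_comp_detail_Xs) auto
  also have "\<dots> \<le> (\<integral>\<omega>. (norm (ul0 l \<omega> - ul0 (l - 1) \<omega>))\<^sup>2 \<partial>M)"
  proof (rule integral_mono)
    show "integrable M (\<lambda>\<omega>. (norm (detail l (ul l \<omega>)))\<^sup>2)"
      using L2rv_detail[OF lk(2) L2rv_ul[OF lk(2)]] by (simp add: L2rv_def)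
    show "integrable M (\<lambda>\<omega>. (norm (ul0 l \<omega> - ul0 (l - 1) \<omega>))\<^sup>2)" using L2 by (simp add: L2rv_def)
    fix \<omega> assume "\<omega> \<in> space M"
    then have "norm (detail l (ul l \<omega>)) \<le> norm (ul0 l \<omega> - ul0 (l - 1) \<omega>)"
      using lk(2) norm_detail_le[OF lk(2) ul0_prev_in_coarse] by (simp add: ul0_def)
    then show "(norm (detail l (ul l \<omega>)))\<^sup>2 \<le> (norm (ul0 l \<omega> - ul0 (l - 1) \<omega>))\<^sup>2"
      by (simp add: power_mono)
  qed
  finally show ?thesis
    using lk by (simp add: L2norm_squared divide_right_mono)
qed

lemma estimator_variance_le:
  "(\<integral>\<omega>. (norm (E_PML V L N Xs \<omega> - integral\<^sup>L M (E_PML V L N Xs)))\<^sup>2 \<partial>M)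
    \<le> (\<Sum>l = 1..L. (L2norm M (\<lambda>\<omega>. ul0 l \<omega> - ul0 (l - 1) \<omega>))\<^sup>2 / real (N l))"
proof -
  let ?I = "SIGMA l:{1..L}. {1..N l}"
  let ?a = "\<lambda>l. L2norm M (\<lambda>\<omega>. ul0 l \<omega> - ul0 (l - 1) \<omega>)"
  let ?T = "\<lambda>i. integral\<^sup>L M (sample_term i)"
  have "integral\<^sup>L M (E_PML V L N Xs) = (\<Sum>i\<in>?I. ?T i)"
    unfolding E_PML_eq_sum_sample_terms
    by (rule Bochner_Integration.integral_sum) (simp add: integrable_L2rv L2rv_sample_term)
  then have "(\<integral>\<omega>. (norm (E_PML V L N Xs \<omega> - integral\<^sup>L M (E_PML V L N Xs)))\<^sup>2 \<partial>M)
      = (\<Sum>i\<in>?I. \<integral>\<omega>. (norm (sample_term i \<omega> - ?T i))\<^sup>2 \<partial>M)"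
    using integral_norm_sum_centered_indep[OF _ sample_terms_indep L2rv_sample_term]
    by (simp add: E_PML_eq_sum_sample_terms sum_subtractf)
  also have "\<dots> \<le> (\<Sum>i\<in>?I. \<integral>\<omega>. (norm (sample_term i \<omega>))\<^sup>2 \<partial>M)"
    using integral_norm_diff_squared[OF L2rv_sample_term, of _ 0] by (intro sum_mono) simp
  also have "\<dots> \<le> (\<Sum>i\<in>?I. (?a (fst i))\<^sup>2 / (real (N (fst i)))\<^sup>2)"
    by (intro sum_mono integral_norm_sample_term_le)
  also have "\<dots> = (\<Sum>l = 1..L. \<Sum>k = 1..N l. (?a l)\<^sup>2 / (real (N l))\<^sup>2)"
    by (subst sum.Sigma) (auto simp: split_def)
  also have "\<dots> = (\<Sum>l = 1..L. (?a l)\<^sup>2 / real (N l))"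
    using N_pos by (intro sum.cong) (simp_all add: power2_eq_square)
  finally show ?thesis .
qed

lemma integral_E_PML:
  "integral\<^sup>L M (E_PML V L N Xs) = (\<Sum>l = 1..L. \<integral>\<omega>. detail l (ul l \<omega>) \<partial>M)"
proof -
  let ?m = "\<lambda>l. \<integral>\<omega>. detail l (ul l \<omega>) \<partial>M"
  have "integral\<^sup>L M (E_PML V L N Xs) = (\<Sum>i\<in>(SIGMA l:{1..L}. {1..N l}). integral\<^sup>L M (sample_term i))"
    unfolding E_PML_eq_sum_sample_terms
    by (rule Bochner_Integration.integral_sum) (simp add: integrable_L2rv L2rv_sample_term)
  also have "\<dots> = (\<Sum>l = 1..L. \<Sum>k = 1..N l. (1 / real (N l)) *\<^sub>R ?m l)"
    by (subst sum.Sigma) (auto simp: split_def integral_sample_term)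
  also have "\<dots> = (\<Sum>l = 1..L. ?m l)"
  proof (rule sum.cong[OF refl])
    fix l assume "l \<in> {1..L}"
    then show "(\<Sum>k = 1..N l. (1 / real (N l)) *\<^sub>R ?m l) = ?m l"
      using N_pos[of l] by (simp add: sum_constant_scaleR)
  qed
  finally show ?thesis .
qed

lemma sum_detail_ul_telescope:
  assumes "1 \<le> L"
  shows "(\<Sum>l = 1..L. detail l (ul l \<omega>)) = ul L \<omega> + (\<Sum>l = 2..L. ul (l - 1) \<omega> - Pproj V l (ul l \<omega>))"
proof -
  have "(\<Sum>l = 2..L. detail l (ul l \<omega>))
      = (\<Sum>l = 2..L. (ul l \<omega> - ul (l - 1) \<omega>) + (ul (l - 1) \<omega> - Pproj V l (ul l \<omega>)))"
    by (simp add: detail_def)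
  also have "\<dots> = (\<Sum>l = 2..L. ul l \<omega> - ul (l - 1) \<omega>)
      + (\<Sum>l = 2..L. ul (l - 1) \<omega> - Pproj V l (ul l \<omega>))"
    by (rule sum.distrib)
  also have "(\<Sum>l = 2..L. ul l \<omega> - ul (l - 1) \<omega>) = ul L \<omega> - ul 1 \<omega>"
    using sum_telescope''[OF assms, of "\<lambda>l. ul l \<omega>"] by (simp add: numeral_2_eq_2)
  moreover have "{1..L} = insert 1 {2..L}" using assms by auto
  ultimately show ?thesis by (simp add: detail_def Pproj_def)
qed

lemma norm_bias_integrand_le:
  assumes L: "1 \<le> L" and \<omega>: "\<omega> \<in> space M"
  shows "norm ((\<Sum>l = 1..L. detail l (ul l \<omega>)) - u \<omega>)
    \<le> norm (u \<omega> - ul0 L \<omega>) + (\<Sum>l = 2..L. norm (ul0 l \<omega> - ul0 (l - 1) \<omega>))"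
proof -
  have coarse_step: "norm (ul (l - 1) \<omega> - Pproj V l (ul l \<omega>)) \<le> norm (ul0 l \<omega> - ul0 (l - 1) \<omega>)"
    if l: "l \<in> {2..L}" for l
  proof -
    have "l \<in> {1..L}" using l by auto
    from norm_orth_proj_diff_le[OF coarse_closed_subspace[OF this] ul0_prev_in_coarse[OF this \<omega>]]
    show ?thesis using l by (simp add: ul0_def coarse_def Pproj_def norm_minus_commute)
  qed
  have "norm ((\<Sum>l = 1..L. detail l (ul l \<omega>)) - u \<omega>)
      = norm ((ul L \<omega> - u \<omega>) + (\<Sum>l = 2..L. ul (l - 1) \<omega> - Pproj V l (ul l \<omega>)))"
    unfolding sum_detail_ul_telescope[OF L] by (simp add: algebra_simps)
  also have "\<dots> \<le> norm (ul L \<omega> - u \<omega>) + (\<Sum>l = 2..L. norm (ul (l - 1) \<omega> - Pproj V l (ul l \<omega>)))"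
    by (rule order_trans[OF norm_triangle_ineq add_left_mono[OF norm_sum]])
  also have "\<dots> \<le> norm (u \<omega> - ul0 L \<omega>) + (\<Sum>l = 2..L. norm (ul0 l \<omega> - ul0 (l - 1) \<omega>))"
    using L by (intro add_mono sum_mono coarse_step) (simp_all add: ul0_def norm_minus_commute)
  finally show ?thesis .
qed

lemma estimator_bias_le:
  assumes L: "1 \<le> L"
  shows "norm (integral\<^sup>L M (E_PML V L N Xs) - integral\<^sup>L M u)
    \<le> L2norm M (\<lambda>\<omega>. u \<omega> - ul0 L \<omega>) + (\<Sum>l = 2..L. L2norm M (\<lambda>\<omega>. ul0 l \<omega> - ul0 (l - 1) \<omega>))"
proof -
  let ?g = "\<lambda>\<omega>. (\<Sum>l = 1..L. detail l (ul l \<omega>)) - u \<omega>"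
  let ?d = "\<lambda>l \<omega>. ul0 l \<omega> - ul0 (l - 1) \<omega>"
  have L2_detail: "L2rv M (\<lambda>\<omega>. \<Sum>l = 1..L. detail l (ul l \<omega>))"
    by (intro L2rv_sum L2rv_detail L2rv_ul) auto
  have L2_L: "L2rv M (\<lambda>\<omega>. u \<omega> - ul0 L \<omega>)" and L2_d: "\<And>l. l \<in> {2..L} \<Longrightarrow> L2rv M (?d l)"
    by (auto intro!: L2rv_diff L2rv_u L2rv_ul0)
  note int_norm = integrable_L2rv[OF L2rv_norm]
  have "integral\<^sup>L M (E_PML V L N Xs) - integral\<^sup>L M u = integral\<^sup>L M ?g"
    using integrable_L2rv[OF L2_detail] integrable_L2rv[OF L2rv_u]
    by (simp add: integral_E_PML integrable_L2rv[OF L2rv_detail[OF _ L2rv_ul]])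
  also have "norm \<dots> \<le> (\<integral>\<omega>. norm (?g \<omega>) \<partial>M)"
    by (rule integral_norm_bound_complete)
  also have "\<dots> \<le> (\<integral>\<omega>. norm (u \<omega> - ul0 L \<omega>) + (\<Sum>l = 2..L. norm (?d l \<omega>)) \<partial>M)"
    using int_norm[OF L2rv_diff[OF L2_detail L2rv_u]] int_norm[OF L2_L] int_norm[OF L2_d]
    by (intro integral_mono norm_bias_integrand_le[OF L] Bochner_Integration.integrable_add
        Bochner_Integration.integrable_sum) auto
  also have "\<dots> = (\<integral>\<omega>. norm (u \<omega> - ul0 L \<omega>) \<partial>M) + (\<Sum>l = 2..L. \<integral>\<omega>. norm (?d l \<omega>) \<partial>M)"
    using int_norm[OF L2_L] int_norm[OF L2_d]
      Bochner_Integration.integral_sum[where I="{2..L}" and f="\<lambda>l \<omega>. norm (?d l \<omega>)"]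
      Bochner_Integration.integrable_sum[where I="{2..L}" and f="\<lambda>l \<omega>. norm (?d l \<omega>)"]
    by simp
  also have "\<dots> \<le> L2norm M (\<lambda>\<omega>. u \<omega> - ul0 L \<omega>) + (\<Sum>l = 2..L. L2norm M (?d l))"
    using L2_L L2_d by (intro add_mono sum_mono integral_norm_le_L2norm)
  finally show ?thesis .
qed

lemma L2rv_E_PML: "L2rv M (E_PML V L N Xs)"
proof -
  have "E_PML V L N Xs = (\<lambda>\<omega>. \<Sum>i\<in>(SIGMA l:{1..L}. {1..N l}). sample_term i \<omega>)"
    by (simp add: fun_eq_iff E_PML_eq_sum_sample_terms)
  then show ?thesis by (simp add: L2rv_sum L2rv_sample_term)
qed

lemma sqrt_estimator_variance_le:
  "sqrt (\<integral>\<omega>. (norm (E_PML V L N Xs \<omega> - integral\<^sup>L M (E_PML V L N Xs)))\<^sup>2 \<partial>M)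
    \<le> (\<Sum>l = 1..L. L2norm M (\<lambda>\<omega>. ul0 l \<omega> - ul0 (l - 1) \<omega>) / sqrt (N l))"
proof -
  let ?a = "\<lambda>l. L2norm M (\<lambda>\<omega>. ul0 l \<omega> - ul0 (l - 1) \<omega>)"
  have "(\<Sum>l = 1..L. (?a l)\<^sup>2 / real (N l)) = (\<Sum>l = 1..L. (?a l / sqrt (N l))\<^sup>2)"
    using N_pos by (intro sum.cong) (simp_all add: power_divide)
  then have "sqrt (\<Sum>l = 1..L. (?a l)\<^sup>2 / real (N l)) = L2_set (\<lambda>l. ?a l / sqrt (N l)) {1..L}"
    by (simp add: L2_set_def)
  also have "\<dots> \<le> (\<Sum>l = 1..L. ?a l / sqrt (N l))"
    by (rule L2_set_le_sum) (simp add: L2norm_def)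
  finally show ?thesis
    using real_sqrt_le_mono[OF estimator_variance_le] by linarith
qed

lemma L2norm_level_diff_le:
  assumes "l \<in> {1..L}"
  shows "L2norm M (\<lambda>\<omega>. ul0 l \<omega> - ul0 (l - 1) \<omega>)
    \<le> L2norm M (\<lambda>\<omega>. u \<omega> - ul0 l \<omega>) + L2norm M (\<lambda>\<omega>. u \<omega> - ul0 (l - 1) \<omega>)"
proof -
  have "l \<le> L" "l - 1 \<le> L" using assms by auto
  then show ?thesis
    using L2norm_diff_le[OF L2rv_diff[OF L2rv_u L2rv_ul0[of "l - 1"]]
        L2rv_diff[OF L2rv_u L2rv_ul0[of l]]]
    by (simp add: add.commute)
qed

end

theorem theorem1:
  fixes M :: "'w measure"
    and V :: "nat \<Rightarrow> 'v::{real_inner, complete_space, second_countable_topology} set"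
    and L :: nat and N :: "nat \<Rightarrow> nat"
    and u :: "'w \<Rightarrow> 'v" and ul :: "nat \<Rightarrow> 'w \<Rightarrow> 'v"
    and Xs :: "nat \<Rightarrow> nat \<Rightarrow> 'w \<Rightarrow> 'v"
  assumes "prob_space M"
    and "L \<ge> 2"
    and "\<And>l. l \<in> {1..L} \<Longrightarrow> N l > 0"
    and "\<And>l. l \<in> {1..L} \<Longrightarrow> subspace (V l) \<and> closed (V l)"
    and "\<And>l. l \<in> {1..<L} \<Longrightarrow> V l \<subseteq> V (Suc l)"
    and "L2rv M u"
    and "\<And>l. l \<in> {1..L} \<Longrightarrow> L2rv M (ul l) \<and> (\<forall>\<omega>\<in>space M. ul l \<omega> \<in> V l)"
    and "\<And>l k. l \<in> {1..L} \<Longrightarrow> k \<in> {1..N l} \<Longrightarrow>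
           Xs l k \<in> borel_measurable M \<and> distr M borel (Xs l k) = distr M borel (ul l)"
    and "prob_space.indep_vars M (\<lambda>_. borel) (\<lambda>(l, k). Xs l k)
           {(l, k). l \<in> {1..L} \<and> k \<in> {1..N l}}"
  shows "sqrt (integral\<^sup>L M (\<lambda>\<omega>. (norm (E_PML V L N Xs \<omega> - integral\<^sup>L M u))\<^sup>2))
           \<le> c0 L N * L2norm M u + (\<Sum>l = 1..L. cl L N l * L2norm M (\<lambda>\<omega>. u \<omega> - ul l \<omega>))"
proof -
  have samples: "{(l, k). l \<in> {1..L} \<and> k \<in> {1..N l}} = (SIGMA l:{1..L}. {1..N l})" by auto
  interpret pmlmc M V L N u ul Xs
    by (intro pmlmc.intro pmlmc_axioms.intro) (use assms samples in simp_all)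
  let ?a = "\<lambda>l. L2norm M (\<lambda>\<omega>. ul0 l \<omega> - ul0 (l - 1) \<omega>)"
  let ?e = "\<lambda>l. L2norm M (\<lambda>\<omega>. u \<omega> - ul0 l \<omega>)"
  let ?mean = "integral\<^sup>L M (E_PML V L N Xs)"
  have "sqrt (\<integral>\<omega>. (norm (E_PML V L N Xs \<omega> - integral\<^sup>L M u))\<^sup>2 \<partial>M)
      = sqrt ((\<integral>\<omega>. (norm (E_PML V L N Xs \<omega> - ?mean))\<^sup>2 \<partial>M) + (norm (?mean - integral\<^sup>L M u))\<^sup>2)"
    by (simp only: integral_norm_diff_squared[OF L2rv_E_PML, of "integral\<^sup>L M u"])
  also have "\<dots> \<le> sqrt (\<integral>\<omega>. (norm (E_PML V L N Xs \<omega> - ?mean))\<^sup>2 \<partial>M) + norm (?mean - integral\<^sup>L M u)"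
    by (rule order_trans[OF sqrt_add_le_add_sqrt]) (simp_all add: integral_nonneg_AE)
  also have "\<dots> \<le> (\<Sum>l = 1..L. ?a l / sqrt (N l)) + ?e L + (\<Sum>l = 2..L. ?a l)"
    using sqrt_estimator_variance_le estimator_bias_le \<open>L \<ge> 2\<close> by simp
  also have "\<dots> \<le> c0 L N * ?e 0 + (\<Sum>l = 1..L. cl L N l * ?e l)"
    using \<open>L \<ge> 2\<close> L2norm_level_diff_le by (intro pmlmc_constants_bound) (simp_all add: L2norm_def)
  also have "\<dots> = c0 L N * L2norm M u + (\<Sum>l = 1..L. cl L N l * L2norm M (\<lambda>\<omega>. u \<omega> - ul l \<omega>))"
    by (simp add: ul0_def)
  finally show ?thesis .
qed

end
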